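(* For $k\ge1$ and $n\in\mathbb Z$, let $E_{k,n}(x_1,\dots,x_k)=\prod_{1\le r\le k}x_r^n\prod_{1\le r\ne s\le k}(x_r-q^{-2}x_s)\in S_k$. Then \[E_{k,n}=\frac{(-1)^{\frac{k(k-1)}2}}{(1-q^{-2})^{k-1}}\,\Upsilon\Big([e_n,[e_{n+2},\cdots,[e_{n+2(k-2)},e_{n+2(k-1)}]_{q^{-4}}\cdots]_{q^{-2(k-1)}}]_{q^{-2k}}\Big),\] where the nested bracket is defined recursively by $X_k=e_{n+2(k-1)}$ and $X_j=[e_{n+2(j-1)},X_{j+1}]_{q^{-2(k-j+1)}}$ for $j=k-1,\dots,1$, the element in question being $X_1$ (so it equals $e_n$ for $k=1$), and $[x,y]_c=xy-c\,yx$.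
   Context: Let $q$ be a formal variable. $U^>_q(L\mathfrak{sl}_2)$ is the $\mathbb C(q)$-algebra generated by $e_r$ ($r\in\mathbb Z$) subject to $(z-q^2w)e(z)e(w)=(q^2z-w)e(w)e(z)$, where $e(z)=\sum_re_rz^{-r}$. The shuffle algebra $S=\bigoplus_{k\ge0}S_k$: $S_k=\mathbb C(q)[x_1^{\pm1},\dots,x_k^{\pm1}]^{S(k)}$, with product $F\star G=\frac{1}{k!\ell!}\mathrm{Sym}_{x_1,\dots,x_{k+\ell}}\big(F(x_1,\dots,x_k)G(x_{k+1},\dots,x_{k+\ell})\prod_{r\le k<r'}\frac{x_r-q^{-2}x_{r'}}{x_r-x_{r'}}\big)$. It is known that $e_r\mapsto x_1^r$ extends to an algebra isomorphism $\Upsilon:U^>_q(L\mathfrak{sl}_2)\to S$. *)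

theory Defs
  imports "HOL-Computational_Algebra.Polynomial" "HOL-Computational_Algebra.Fraction_Field"
          "HOL-Combinatorics.Permutations"
begin

type_synonym K = "complex poly fract"

definition qq :: K where
  "qq = Fract [:0, 1:] 1"

text \<open>An element of S_k is represented by the function it defines on points
  x_0, ..., x_(k-1) of K (only the first k coordinates are used).
  Since K is infinite, a Laurent polynomial is determined by its values
  at points with pairwise distinct nonzero coordinates.\<close>
type_synonym sh = "(nat \<Rightarrow> K) \<Rightarrow> K"

definition shuf :: "nat \<Rightarrow> nat \<Rightarrow> sh \<Rightarrow> sh \<Rightarrow> sh" where
  "shuf k l F G = (\<lambda>x. (1 / of_nat (fact k * fact l)) *
     (\<Sum>\<sigma>\<in>{\<sigma>. \<sigma> permutes {..<k+l}}.
        F (x \<circ> \<sigma>) * G (\<lambda>i. x (\<sigma> (k + i))) *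
        (\<Prod>r<k. \<Prod>r'\<in>{k..<k+l}.
            (x (\<sigma> r) - qq powi (-2) * x (\<sigma> r')) / (x (\<sigma> r) - x (\<sigma> r')))))"

definition qbr :: "nat \<Rightarrow> nat \<Rightarrow> K \<Rightarrow> sh \<Rightarrow> sh \<Rightarrow> sh" where
  "qbr k l c F G = (\<lambda>x. shuf k l F G x - c * shuf l k G F x)"

definition ups_e :: "int \<Rightarrow> sh" where
  "ups_e s = (\<lambda>x. x 0 powi s)"

fun nestY :: "nat \<Rightarrow> int \<Rightarrow> sh" where
  "nestY 0 s = (\<lambda>x. 1)"
| "nestY (Suc 0) s = ups_e s"
| "nestY (Suc (Suc m)) s =
     qbr 1 (Suc m) (qq powi (-2 * (int m + 2))) (ups_e s) (nestY (Suc m) (s + 2))"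

definition Ekn :: "nat \<Rightarrow> int \<Rightarrow> sh" where
  "Ekn k n = (\<lambda>x. (\<Prod>r<k. x r powi n) *
     (\<Prod>r<k. \<Prod>s\<in>{..<k} - {r}. x r - qq powi (-2) * x s))"

end

theory Submission
  imports Defs
begin

(* With t = q^-2, the bracket defining nestY (k+1) n is, up to the scalar
  relating nestY k (n+2) to E_(k,n+2), the bracket [e_n, E_(k,n+2)]_(t^(k+1)). Both of its
  shuffle products are sums over the variable x_a that carries e_n, so after cancelling
  prod_b x_b^n the inductive step becomes an identity of rational functions in x_0, ..., x_k:

    sum_a P_a Q_a prod_(b<>a) (x_a - t x_b) / (x_a - x_b)
      - t^(k+1) sum_a P_a Q_a prod_(b<>a) (x_b - t x_a) / (x_b - x_a)
    = (-1)^k (1 - t) prod_(b<>c) (x_b - t x_c),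

  where P_a = prod_(b<>a) x_b^2 and Q_a = prod_(b<>c; b,c<>a) (x_b - t x_c).
  If moreover x_b <> t x_c for all b <> c, the 2k+3 points 0, x_a, t x_a are distinct, and
  dividing by the right-hand side turns the identity into the vanishing of
  sum_y 1 / prod_(w<>y) (y - w) over these nodes, which is the coefficient of degree 2k+2 of
  the Lagrange interpolant of the constant 1. The genericity assumption is then removed one
  coordinate at a time: as a function of a single x_a, the defect of the identity is rational
  with poles only at the other coordinates, and it vanishes at all but finitely many points. *)

section \<open>The insertion identity at generic points\<close>

lemma lagrange_reciprocal_sum_eq_0:
  fixes Y :: "'a::field set"
  assumes fin: "finite Y" and card: "card Y \<ge> 2"
  shows "(\<Sum>y\<in>Y. 1 / (\<Prod>w\<in>Y-{y}. y - w)) = 0"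
proof -
  define c where "c y = 1 / (\<Prod>w\<in>Y-{y}. y - w)" for y
  define L where "L = (\<Sum>y\<in>Y. smult (c y) (\<Prod>w\<in>Y-{y}. [:-w, 1:]))"
  have coeff_L: "coeff L (card Y - 1) = (\<Sum>y\<in>Y. c y)"
  proof -
    have "coeff (\<Prod>w\<in>Y-{y}. [:-w, 1:]) (card Y - 1) = 1" if "y \<in> Y" for y
    proof -
      have "degree (\<Prod>w\<in>Y-{y}. [:-w, 1:]) = card Y - 1"
        using fin that by (subst degree_prod_eq_sum_degree) auto
      then have "coeff (\<Prod>w\<in>Y-{y}. [:-w, 1:]) (card Y - 1) = lead_coeff (\<Prod>w\<in>Y-{y}. [:-w, 1:])"
        by simp
      then show ?thesis by (simp add: lead_coeff_prod)
    qed
    then show ?thesis unfolding L_def coeff_sum by simp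
  qed
  have degree_L: "degree L \<le> card Y - 1"
    unfolding L_def using fin
    by (intro degree_sum_le order.trans[OF degree_smult_le])
       (auto simp: degree_prod_eq_sum_degree)
  have poly_L: "poly L z = 1" if z: "z \<in> Y" for z
  proof -
    have "poly L z = (\<Sum>y\<in>Y. c y * (\<Prod>w\<in>Y-{y}. z - w))"
      unfolding L_def by (simp add: poly_sum poly_prod)
    also have "\<dots> = c z * (\<Prod>w\<in>Y-{z}. z - w)"
      using fin z by (subst sum.remove) (auto intro!: sum.neutral simp: prod_zero_iff)
    also have "\<dots> = 1"
      using fin by (simp add: c_def prod_zero_iff)
    finally show ?thesis .
  qed
  text \<open>L interpolates the constant 1 at the card Y nodes, so L = 1; comparing the
    coefficients of degree card Y - 1 gives the claim.\<close>
  have "L = 1"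
    by (rule poly_eqI_degree[of Y]) (use poly_L degree_L card in auto)
  then show ?thesis
    using coeff_L card by (simp add: c_def)
qed

definition offdiag_prod :: "'a::comm_ring_1 \<Rightarrow> ('i \<Rightarrow> 'a) \<Rightarrow> 'i set \<Rightarrow> 'a" where
  "offdiag_prod t x S = (\<Prod>a\<in>S. \<Prod>b\<in>S-{a}. x a - t * x b)"

lemma offdiag_prod_remove:
  assumes "finite S" and "a \<in> S"
  shows "offdiag_prod t x S =
    offdiag_prod t x (S-{a}) * (\<Prod>b\<in>S-{a}. x a - t * x b) * (\<Prod>b\<in>S-{a}. x b - t * x a)"
proof -
  have "(\<Prod>b\<in>S-{c}. x c - t * x b) = (x c - t * x a) * (\<Prod>b\<in>S-{a}-{c}. x c - t * x b)"
    if "c \<in> S - {a}" for c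
  proof -
    have "S - {c} = insert a (S - {a} - {c})" using that assms(2) by auto
    then show ?thesis using assms(1) by simp
  qed
  then have "(\<Prod>c\<in>S-{a}. \<Prod>b\<in>S-{c}. x c - t * x b) =
      (\<Prod>c\<in>S-{a}. x c - t * x a) * offdiag_prod t x (S-{a})"
    by (simp add: offdiag_prod_def prod.distrib)
  with assms show ?thesis
    by (simp add: offdiag_prod_def prod.remove ac_simps)
qed

lemma offdiag_prod_reindex:
  assumes "inj_on h S"
  shows "offdiag_prod t (x \<circ> h) S = offdiag_prod t x (h ` S)"
proof -
  have "(\<Prod>b\<in>S-{a}. x (h a) - t * x (h b)) = (\<Prod>c\<in>h ` S - {h a}. x (h a) - t * x c)"
    if "a \<in> S" for a
  proof -
    have "h ` S - {h a} = h ` (S - {a})" using assms that by (auto simp: inj_on_def)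
    then show ?thesis
      using assms by (simp add: prod.reindex inj_on_diff)
  qed
  then show ?thesis
    using assms by (simp add: offdiag_prod_def prod.reindex)
qed

definition shuffle_factor :: "'a::field \<Rightarrow> 'a \<Rightarrow> 'a \<Rightarrow> 'a" where
  "shuffle_factor t u v = (u - t * v) / (u - v)"

definition left_insertion_term :: "'a::field \<Rightarrow> ('i \<Rightarrow> 'a) \<Rightarrow> 'i set \<Rightarrow> 'i \<Rightarrow> 'a" where
  "left_insertion_term t x S a = (\<Prod>b\<in>S-{a}. x b ^ 2) * offdiag_prod t x (S-{a}) *
     (\<Prod>b\<in>S-{a}. shuffle_factor t (x a) (x b))"

definition right_insertion_term :: "'a::field \<Rightarrow> ('i \<Rightarrow> 'a) \<Rightarrow> 'i set \<Rightarrow> 'i \<Rightarrow> 'a" where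
  "right_insertion_term t x S a = (\<Prod>b\<in>S-{a}. x b ^ 2) * offdiag_prod t x (S-{a}) *
     (\<Prod>b\<in>S-{a}. shuffle_factor t (x b) (x a))"

definition left_insertion_sum :: "'a::field \<Rightarrow> ('i \<Rightarrow> 'a) \<Rightarrow> 'i set \<Rightarrow> 'a" where
  "left_insertion_sum t x S = (\<Sum>a\<in>S. left_insertion_term t x S a)"

definition right_insertion_sum :: "'a::field \<Rightarrow> ('i \<Rightarrow> 'a) \<Rightarrow> 'i set \<Rightarrow> 'a" where
  "right_insertion_sum t x S = (\<Sum>a\<in>S. right_insertion_term t x S a)"

locale generic_point =
  fixes S :: "'i set" and x :: "'i \<Rightarrow> 'a::field" and t :: 'a
  assumes finite_S: "finite S" and S_nonempty: "S \<noteq> {}" and inj_x: "inj_on x S"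
    and x_nonzero: "a \<in> S \<Longrightarrow> x a \<noteq> 0"
    and x_generic: "a \<in> S \<Longrightarrow> b \<in> S \<Longrightarrow> a \<noteq> b \<Longrightarrow> x a \<noteq> t * x b"
    and t_nonzero: "t \<noteq> 0" and t_ne_1: "t \<noteq> 1"
begin

definition nodes :: "'a set" where
  "nodes = insert 0 (x ` S \<union> (\<lambda>a. t * x a) ` S)"

definition node_prod :: "'a \<Rightarrow> 'a" where
  "node_prod y = (\<Prod>w\<in>nodes-{y}. y - w)"

lemma inj_tx: "inj_on (\<lambda>a. t * x a) S"
  using inj_x t_nonzero by (auto simp: inj_on_def)

lemma x_ne_tx:
  assumes "a \<in> S" and "b \<in> S"
  shows "x a \<noteq> t * x b" and "t * x b \<noteq> x a"
proof -
  have "x a \<noteq> t * x a"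
    using x_nonzero[OF assms(1)] t_ne_1 by auto
  then show "x a \<noteq> t * x b"
    using x_generic[OF assms] by (cases "a = b") auto
  then show "t * x b \<noteq> x a" by simp
qed

lemma zero_notin: "0 \<notin> x ` S" "0 \<notin> (\<lambda>a. t * x a) ` S"
  using x_nonzero t_nonzero by auto

lemma images_disjoint: "x ` S \<inter> (\<lambda>a. t * x a) ` S = {}"
  using x_ne_tx by auto

lemma sum_nodes:
  "(\<Sum>y\<in>nodes. f y) = f 0 + (\<Sum>a\<in>S. f (x a)) + (\<Sum>a\<in>S. f (t * x a))"
  using finite_S zero_notin images_disjoint inj_x inj_tx
  by (simp add: nodes_def sum.union_disjoint sum.reindex add.assoc)

lemma card_nodes: "card nodes = 2 * card S + 1"
  unfolding card_eq_sum sum_nodes by simp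

lemma t_power_card: "t ^ card S = t * t ^ (card S - 1)"
proof -
  have "card S = Suc (card S - 1)"
    using finite_S S_nonempty by (simp add: card_gt_0_iff)
  then show ?thesis by (metis power_Suc)
qed

lemma node_prod_0: "node_prod 0 = t ^ card S * (\<Prod>a\<in>S. x a) ^ 2"
proof -
  have "nodes - {0} = x ` S \<union> (\<lambda>a. t * x a) ` S"
    using zero_notin by (auto simp: nodes_def)
  then have "node_prod 0 = (\<Prod>a\<in>S. - x a) * (\<Prod>a\<in>S. - (t * x a))"
    using finite_S images_disjoint inj_x inj_tx
    by (simp add: node_prod_def prod.union_disjoint prod.reindex)
  also have "\<dots> = (\<Prod>a\<in>S. t * x a ^ 2)"
    by (simp add: prod.distrib[symmetric] power2_eq_square mult.left_commute)
  finally show ?thesis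
    by (simp add: prod.distrib power_mult_distrib[symmetric] prod_power_distrib)
qed

lemma node_prod_x:
  assumes a: "a \<in> S"
  shows "node_prod (x a) =
    (1 - t) * x a ^ 2 * (\<Prod>b\<in>S-{a}. x a - x b) * (\<Prod>b\<in>S-{a}. x a - t * x b)"
proof -
  have "nodes - {x a} = insert 0 (x ` (S - {a}) \<union> (\<lambda>b. t * x b) ` S)"
    using a x_nonzero x_ne_tx inj_x by (auto simp: nodes_def inj_on_def)
  moreover have "x ` (S - {a}) \<inter> (\<lambda>b. t * x b) ` S = {}"
    and "0 \<notin> x ` (S - {a}) \<union> (\<lambda>b. t * x b) ` S"
    using images_disjoint zero_notin by auto
  ultimately have "node_prod (x a) =
      x a * (\<Prod>b\<in>S-{a}. x a - x b) * (\<Prod>b\<in>S. x a - t * x b)"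
    using finite_S inj_tx inj_on_diff[OF inj_x]
    by (simp add: node_prod_def prod.union_disjoint prod.reindex mult.assoc)
  also have "(\<Prod>b\<in>S. x a - t * x b) = (x a - t * x a) * (\<Prod>b\<in>S-{a}. x a - t * x b)"
    using finite_S a by (simp add: prod.remove)
  finally show ?thesis
    by (simp add: algebra_simps power2_eq_square)
qed

lemma node_prod_tx:
  assumes a: "a \<in> S"
  shows "node_prod (t * x a) = (t - 1) * (-1) ^ (card S - 1) * t ^ card S * x a ^ 2 *
    (\<Prod>b\<in>S-{a}. x b - t * x a) * (\<Prod>b\<in>S-{a}. x a - x b)"
proof -
  have "nodes - {t * x a} = insert 0 (x ` S \<union> (\<lambda>b. t * x b) ` (S - {a}))"
    using a x_nonzero x_ne_tx inj_tx t_nonzero by (auto simp: nodes_def inj_on_def)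
  moreover have "x ` S \<inter> (\<lambda>b. t * x b) ` (S - {a}) = {}"
    and "0 \<notin> x ` S \<union> (\<lambda>b. t * x b) ` (S - {a})"
    using images_disjoint zero_notin by auto
  ultimately have "node_prod (t * x a) =
      t * x a * (\<Prod>b\<in>S. t * x a - x b) * (\<Prod>b\<in>S-{a}. t * x a - t * x b)"
    using finite_S inj_x inj_on_diff[OF inj_tx]
    by (simp add: node_prod_def prod.union_disjoint prod.reindex mult.assoc)
  also have "(\<Prod>b\<in>S. t * x a - x b) = (t * x a - x a) * (\<Prod>b\<in>S-{a}. t * x a - x b)"
    using finite_S a by (simp add: prod.remove)
  also have "(\<Prod>b\<in>S-{a}. t * x a - x b) = (-1) ^ (card S - 1) * (\<Prod>b\<in>S-{a}. x b - t * x a)"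
    using finite_S a by (simp add: prod_diff_swap[of "\<lambda>_. t * x a"])
  also have "(\<Prod>b\<in>S-{a}. t * x a - t * x b) = t ^ (card S - 1) * (\<Prod>b\<in>S-{a}. x a - x b)"
    using finite_S a by (simp add: prod.distrib flip: right_diff_distrib)
  finally show ?thesis
    using t_power_card by (simp add: algebra_simps power2_eq_square)
qed

lemma node_reciprocals_sum:
  "1 / node_prod 0 + (\<Sum>a\<in>S. 1 / node_prod (x a)) + (\<Sum>a\<in>S. 1 / node_prod (t * x a)) = 0"
proof -
  have "card S \<ge> 1"
    using finite_S S_nonempty by (simp add: Suc_le_eq card_gt_0_iff)
  then have "(\<Sum>y\<in>nodes. 1 / node_prod y) = 0"
    unfolding node_prod_def using finite_S card_nodes
    by (intro lagrange_reciprocal_sum_eq_0) (auto simp: nodes_def)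
  then show ?thesis
    by (simp add: sum_nodes)
qed

lemma prod_differences_nonzero:
  assumes "a \<in> S"
  shows "(\<Prod>b\<in>S-{a}. x a - x b) \<noteq> 0" and "(\<Prod>b\<in>S-{a}. x b - t * x a) \<noteq> 0"
    and "(\<Prod>b\<in>S-{a}. x a - t * x b) \<noteq> 0"
  using assms finite_S inj_x x_ne_tx by (auto simp: prod_zero_iff inj_on_def)

lemma left_insertion_term_eq:
  assumes a: "a \<in> S"
  shows "left_insertion_term t x S a =
    (t - 1) * (-1) ^ (card S - 1) * t ^ card S * (\<Prod>a\<in>S. x a) ^ 2 * offdiag_prod t x S /
      node_prod (t * x a)"
proof -
  have "(\<Prod>a\<in>S. x a) ^ 2 = x a ^ 2 * (\<Prod>b\<in>S-{a}. x b ^ 2)"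
    using finite_S a by (simp add: prod.remove power_mult_distrib prod_power_distrib)
  then show ?thesis
    unfolding left_insertion_term_def node_prod_tx[OF a] offdiag_prod_remove[OF finite_S a]
      shuffle_factor_def prod_dividef
    using prod_differences_nonzero[OF a] x_nonzero[OF a] t_nonzero t_ne_1
    by (simp add: field_simps)
qed

lemma right_insertion_term_eq:
  assumes a: "a \<in> S"
  shows "t ^ card S * right_insertion_term t x S a =
    - ((t - 1) * (-1) ^ (card S - 1) * t ^ card S * (\<Prod>a\<in>S. x a) ^ 2 * offdiag_prod t x S /
      node_prod (x a))"
proof -
  have "(\<Prod>a\<in>S. x a) ^ 2 = x a ^ 2 * (\<Prod>b\<in>S-{a}. x b ^ 2)"
    using finite_S a by (simp add: prod.remove power_mult_distrib prod_power_distrib)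
  moreover have "(\<Prod>b\<in>S-{a}. x b - x a) = (-1) ^ (card S - 1) * (\<Prod>b\<in>S-{a}. x a - x b)"
    using finite_S a by (simp add: prod_diff_swap[of x])
  moreover have "(-1 :: 'a) ^ (card S - 1) * (-1) ^ (card S - 1) = 1"
    by (simp flip: power_mult_distrib)
  ultimately show ?thesis
    unfolding right_insertion_term_def node_prod_x[OF a] offdiag_prod_remove[OF finite_S a]
      shuffle_factor_def prod_dividef
    using prod_differences_nonzero[OF a] x_nonzero[OF a] t_nonzero t_ne_1
    by (simp add: field_simps)
qed

lemma insertion_sums_identity:
  "left_insertion_sum t x S - t ^ card S * right_insertion_sum t x S =
    (-1) ^ (card S - 1) * (1 - t) * offdiag_prod t x S"
proof -
  define c where "c = (t - 1) * (-1) ^ (card S - 1) * t ^ card S * (\<Prod>a\<in>S. x a) ^ 2"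
  have "left_insertion_sum t x S = c * offdiag_prod t x S * (\<Sum>a\<in>S. 1 / node_prod (t * x a))"
    unfolding left_insertion_sum_def sum_distrib_left
    by (intro sum.cong) (simp_all add: left_insertion_term_eq c_def)
  moreover have "t ^ card S * right_insertion_sum t x S =
      - (c * offdiag_prod t x S * (\<Sum>a\<in>S. 1 / node_prod (x a)))"
    unfolding right_insertion_sum_def sum_distrib_left sum_negf[symmetric]
    by (intro sum.cong) (simp_all add: right_insertion_term_eq c_def)
  ultimately have "left_insertion_sum t x S - t ^ card S * right_insertion_sum t x S =
      c * offdiag_prod t x S * ((\<Sum>a\<in>S. 1 / node_prod (t * x a)) + (\<Sum>a\<in>S. 1 / node_prod (x a)))"
    by (simp add: algebra_simps)
  also have "(\<Sum>a\<in>S. 1 / node_prod (t * x a)) + (\<Sum>a\<in>S. 1 / node_prod (x a)) = - (1 / node_prod 0)"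
    using node_reciprocals_sum by (simp add: eq_neg_iff_add_eq_0 add_ac)
  also have "c * offdiag_prod t x S * - (1 / node_prod 0) = (-1) ^ (card S - 1) * (1 - t) * offdiag_prod t x S"
    using finite_S x_nonzero t_nonzero by (simp add: c_def node_prod_0 prod_zero_iff field_simps)
  finally show ?thesis .
qed

end

section \<open>Removing the genericity assumption\<close>

definition rational_outside :: "'a::field set \<Rightarrow> ('a \<Rightarrow> 'a) \<Rightarrow> bool" where
  "rational_outside E f \<longleftrightarrow> (\<exists>p n. \<forall>z. z \<notin> E \<longrightarrow> f z = poly p z / (\<Prod>e\<in>E. z - e) ^ n)"

lemma rational_outside_const: "rational_outside E (\<lambda>z. c)"
  unfolding rational_outside_def by (rule exI[of _ "[:c:]"], rule exI[of _ 0]) simp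

lemma rational_outside_ident: "rational_outside E (\<lambda>z. z)"
  unfolding rational_outside_def by (rule exI[of _ "[:0, 1:]"], rule exI[of _ 0]) simp

lemma rational_outside_add:
  assumes E: "finite E" and f: "rational_outside E f" and g: "rational_outside E g"
  shows "rational_outside E (\<lambda>z. f z + g z)"
proof -
  obtain p n where p: "\<And>z. z \<notin> E \<Longrightarrow> f z = poly p z / (\<Prod>e\<in>E. z - e) ^ n"
    using f unfolding rational_outside_def by blast
  obtain q m where q: "\<And>z. z \<notin> E \<Longrightarrow> g z = poly q z / (\<Prod>e\<in>E. z - e) ^ m"
    using g unfolding rational_outside_def by blast
  define W where "W = (\<Prod>e\<in>E. [:-e, 1:])"
  have "f z + g z = poly (p * W ^ m + q * W ^ n) z / (\<Prod>e\<in>E. z - e) ^ (n + m)" if "z \<notin> E" for z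
    using E that unfolding p[OF that] q[OF that]
    by (simp add: W_def poly_prod power_add prod_zero_iff field_simps)
  then show ?thesis
    unfolding rational_outside_def by blast
qed

lemma rational_outside_mult:
  assumes f: "rational_outside E f" and g: "rational_outside E g"
  shows "rational_outside E (\<lambda>z. f z * g z)"
proof -
  obtain p n where p: "\<And>z. z \<notin> E \<Longrightarrow> f z = poly p z / (\<Prod>e\<in>E. z - e) ^ n"
    using f unfolding rational_outside_def by blast
  obtain q m where q: "\<And>z. z \<notin> E \<Longrightarrow> g z = poly q z / (\<Prod>e\<in>E. z - e) ^ m"
    using g unfolding rational_outside_def by blast
  have "f z * g z = poly (p * q) z / (\<Prod>e\<in>E. z - e) ^ (n + m)" if "z \<notin> E" for z
    unfolding p[OF that] q[OF that] by (simp add: power_add)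
  then show ?thesis
    unfolding rational_outside_def by blast
qed

lemma rational_outside_diff:
  assumes "finite E" and "rational_outside E f" and "rational_outside E g"
  shows "rational_outside E (\<lambda>z. f z - g z)"
  using rational_outside_add[OF assms(1,2) rational_outside_mult[OF rational_outside_const[of E "-1"] assms(3)]]
  by simp

lemma rational_outside_sum:
  assumes "finite E" and "\<And>i. i \<in> A \<Longrightarrow> rational_outside E (\<lambda>z. f z i)"
  shows "rational_outside E (\<lambda>z. \<Sum>i\<in>A. f z i)"
  using assms(2)
  by (induction A rule: infinite_finite_induct)
     (simp_all add: rational_outside_const rational_outside_add[OF assms(1)])

lemma rational_outside_prod:
  assumes "\<And>i. i \<in> A \<Longrightarrow> rational_outside E (\<lambda>z. f z i)"
  shows "rational_outside E (\<lambda>z. \<Prod>i\<in>A. f z i)"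
  using assms
  by (induction A rule: infinite_finite_induct)
     (simp_all add: rational_outside_const rational_outside_mult)

lemma rational_outside_power:
  assumes "rational_outside E f"
  shows "rational_outside E (\<lambda>z. f z ^ k)"
  using rational_outside_prod[of "{..<k}" E "\<lambda>z _. f z"] assms by simp

lemma rational_outside_inverse_diff:
  assumes E: "finite E" and e: "e \<in> E"
  shows "rational_outside E (\<lambda>z. 1 / (z - e))"
proof -
  have "1 / (z - e) = poly (\<Prod>e\<in>E-{e}. [:-e, 1:]) z / (\<Prod>e\<in>E. z - e) ^ 1" if "z \<notin> E" for z
    using E e that by (simp add: prod.remove poly_prod prod_zero_iff)
  then show ?thesis
    unfolding rational_outside_def by blast
qed

lemma rational_outside_fun_upd: "rational_outside E (\<lambda>z. (x(m := z)) c)"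
  by (cases "c = m") (simp_all add: rational_outside_const rational_outside_ident)

lemma rational_outside_vanishes:
  fixes f :: "'a::field_char_0 \<Rightarrow> 'a"
  assumes E: "finite E" and f: "rational_outside E f"
    and zero: "\<forall>\<^sub>F z in cofinite. f z = 0" and z: "z \<notin> E"
  shows "f z = 0"
proof -
  obtain p n where p: "\<And>z. z \<notin> E \<Longrightarrow> f z = poly p z / (\<Prod>e\<in>E. z - e) ^ n"
    using f unfolding rational_outside_def by blast
  have "UNIV \<subseteq> {z. f z \<noteq> 0} \<union> E \<union> {z. poly p z = 0}"
    using p E by (force simp: prod_zero_iff)
  moreover have "finite {z. f z \<noteq> 0}"
    using zero by (simp add: eventually_cofinite)
  ultimately have "p = 0"
    using E infinite_UNIV_char_0 poly_roots_finite by (metis finite_Un finite_subset)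
  then show ?thesis
    using p[OF z] by simp
qed

lemma rational_outside_shuffle_factor:
  assumes S: "finite S" and inj: "inj_on x S" and ab: "a \<in> S" "b \<in> S" "a \<noteq> b"
  shows "rational_outside (x ` (S - {m})) (\<lambda>z. shuffle_factor t ((x(m := z)) a) ((x(m := z)) b))"
proof -
  let ?E = "x ` (S - {m})" and ?y = "\<lambda>z. x(m := z)"
  have E: "finite ?E" using S by simp
  have "rational_outside ?E (\<lambda>z. 1 / (?y z a - ?y z b))"
  proof (cases "a = m \<or> b = m")
    case True
    then consider "a = m" | "b = m" "a \<noteq> m" by blast
    then show ?thesis
    proof cases
      case 1
      then show ?thesis using ab rational_outside_inverse_diff[OF E, of "x b"] by simp
    next
      case 2
      then have "rational_outside ?E (\<lambda>z. - 1 * (1 / (z - x a)))"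
        using ab by (intro rational_outside_mult rational_outside_const rational_outside_inverse_diff E) auto
      with 2 show ?thesis by (simp add: minus_divide_right)
    qed
  qed (simp add: rational_outside_const)
  then show ?thesis
    unfolding shuffle_factor_def divide_inverse
    by (intro rational_outside_mult rational_outside_diff[OF E] rational_outside_const
        rational_outside_fun_upd) (simp add: inverse_eq_divide)
qed

definition insertion_defect :: "'a::field \<Rightarrow> ('i \<Rightarrow> 'a) \<Rightarrow> 'i set \<Rightarrow> 'a" where
  "insertion_defect t x S = left_insertion_sum t x S - t ^ card S * right_insertion_sum t x S -
     (-1) ^ (card S - 1) * (1 - t) * offdiag_prod t x S"

lemma rational_outside_insertion_defect:
  assumes S: "finite S" and inj: "inj_on x S"
  shows "rational_outside (x ` (S - {m})) (\<lambda>z. insertion_defect t (x(m := z)) S)"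
proof -
  have E: "finite (x ` (S - {m}))" using S by simp
  show ?thesis
    unfolding insertion_defect_def left_insertion_sum_def right_insertion_sum_def
      left_insertion_term_def right_insertion_term_def offdiag_prod_def
    by (intro rational_outside_diff[OF E] rational_outside_mult rational_outside_sum[OF E]
        rational_outside_prod rational_outside_power rational_outside_const rational_outside_fun_upd
        rational_outside_shuffle_factor[OF S inj]) auto
qed

definition generic_at :: "'a::field \<Rightarrow> ('i \<Rightarrow> 'a) \<Rightarrow> 'i set \<Rightarrow> 'i \<Rightarrow> bool" where
  "generic_at t x S i \<longleftrightarrow> x i \<noteq> 0 \<and> (\<forall>b\<in>S-{i}. x i \<noteq> t * x b \<and> x b \<noteq> t * x i)"

lemma insertion_defect_eq_0_if_generic:
  assumes "finite S" and "S \<noteq> {}" and "inj_on x S" and "t \<noteq> 0" and "t \<noteq> 1"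
    and "\<forall>i\<in>S. generic_at t x S i"
  shows "insertion_defect t x S = 0"
proof -
  interpret generic_point S x t
    using assms by unfold_locales (auto simp: generic_at_def)
  show ?thesis
    using insertion_sums_identity by (simp add: insertion_defect_def)
qed

lemma generic_at_fun_upd:
  assumes "generic_at t x S i" and "i \<noteq> m" and "z \<noteq> t * x i" and "x i \<noteq> t * z"
  shows "generic_at t (x(m := z)) S i"
  using assms by (simp add: generic_at_def)

lemma eventually_generic_fun_upd:
  fixes x :: "'i \<Rightarrow> 'a::field"
  assumes t: "t \<noteq> 0" and S: "finite S" and inj: "inj_on x S" and m: "m \<in> S"
  shows "\<forall>\<^sub>F z in cofinite. inj_on (x(m := z)) S \<and> generic_at t (x(m := z)) S m \<and>
    (\<forall>i\<in>S-{m}. generic_at t x S i \<longrightarrow> generic_at t (x(m := z)) S i)"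
proof -
  define B where "B = insert 0 (x ` S \<union> (\<lambda>b. t * x b) ` S \<union> (\<lambda>b. x b / t) ` S)"
  have "inj_on (x(m := z)) S \<and> generic_at t (x(m := z)) S m \<and>
      (\<forall>i\<in>S-{m}. generic_at t x S i \<longrightarrow> generic_at t (x(m := z)) S i)" if z: "z \<notin> B" for z
  proof (intro conjI ballI impI)
    have "x b \<noteq> t * z" if "b \<in> S" for b
    proof
      assume "x b = t * z"
      then have "z = x b / t" using t by simp
      then show False using z that by (auto simp: B_def)
    qed
    then have z_generic: "z \<noteq> 0" "z \<notin> x ` (S - {m})" "\<And>b. b \<in> S \<Longrightarrow> z \<noteq> t * x b \<and> x b \<noteq> t * z"
      using z by (auto simp: B_def)
    have "inj_on (x(m := z)) (insert m (S - {m}))"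
      unfolding inj_on_insert
      using inj_on_fun_updI[OF inj_on_diff[OF inj, of "{m}"], where y = z and x = m] z_generic(2)
      by (simp add: fun_upd_image)
    then show "inj_on (x(m := z)) S"
      using m by (simp add: insert_absorb)
    show "generic_at t (x(m := z)) S m"
      using z_generic by (simp add: generic_at_def)
    show "generic_at t (x(m := z)) S i" if "i \<in> S - {m}" and "generic_at t x S i" for i
      using that z_generic(3)[of i] by (intro generic_at_fun_upd) auto
  qed
  moreover have "finite B"
    using S by (simp add: B_def)
  ultimately show ?thesis
    unfolding eventually_cofinite by (auto intro: finite_subset)
qed

lemma insertion_defect_eq_0:
  fixes x :: "'i \<Rightarrow> 'a::field_char_0"
  assumes S: "finite S" "S \<noteq> {}" and inj: "inj_on x S" and t: "t \<noteq> 0" "t \<noteq> 1"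
  shows "insertion_defect t x S = 0"
proof -
  text \<open>Induction on the set F of coordinates at which genericity may fail.\<close>
  have "insertion_defect t x S = 0"
    if "finite F" "inj_on x S" "\<forall>i\<in>S-F. generic_at t x S i" for F x
    using that
  proof (induction F arbitrary: x rule: finite_induct)
    case empty
    then show ?case using insertion_defect_eq_0_if_generic[OF S _ t] by simp
  next
    case (insert m F)
    show ?case
    proof (cases "m \<in> S")
      case False
      then show ?thesis using insert by (simp add: insert_Diff_if)
    next
      case m: True
      have "\<forall>\<^sub>F z in cofinite. insertion_defect t (x(m := z)) S = 0"
        using eventually_generic_fun_upd[OF t(1) S(1) insert.prems(1) m]
      proof (rule eventually_mono, intro insert.IH ballI)
        fix z i
        assume z: "inj_on (x(m := z)) S \<and> generic_at t (x(m := z)) S m \<and>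
          (\<forall>i\<in>S-{m}. generic_at t x S i \<longrightarrow> generic_at t (x(m := z)) S i)"
        then show "inj_on (x(m := z)) S" by blast
        assume "i \<in> S - F"
        then show "generic_at t (x(m := z)) S i"
          using z insert.prems(2) by (cases "i = m") auto
      qed
      moreover have "x m \<notin> x ` (S - {m})"
        using insert.prems(1) m by (auto simp: inj_on_def)
      ultimately have "insertion_defect t (x(m := x m)) S = 0"
        using S(1) rational_outside_insertion_defect[OF S(1) insert.prems(1)]
        by (intro rational_outside_vanishes[where f = "\<lambda>z. insertion_defect t (x(m := z)) S"]) auto
      then show ?thesis by simp
    qed
  qed
  from this[of S x] show ?thesis using S inj by simp
qed

section \<open>Shuffle products with a single generator\<close>

lemma sum_permutes_apply:
  fixes h :: "'b \<Rightarrow> 'a::{idom, ring_char_0}"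
  assumes S: "finite S" and i: "i \<in> S"
  shows "(\<Sum>\<sigma> | \<sigma> permutes S. h (\<sigma> i)) = of_nat (fact (card S - 1)) * (\<Sum>a\<in>S. h a)"
proof -
  let ?P = "{\<sigma>. \<sigma> permutes S}"
  text \<open>Composing with a transposition shows that the left-hand side does not depend on i.\<close>
  have independent: "(\<Sum>\<sigma>\<in>?P. h (\<sigma> i')) = (\<Sum>\<sigma>\<in>?P. h (\<sigma> i))" if "i' \<in> S" for i'
    using sum_permutations_compose_right[OF permutes_swap_id[OF that i], of "\<lambda>\<sigma>. h (\<sigma> i)"]
    by simp
  have "(\<Sum>i'\<in>S. \<Sum>\<sigma>\<in>?P. h (\<sigma> i')) = (\<Sum>i'\<in>S. \<Sum>\<sigma>\<in>?P. h (\<sigma> i))"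
    by (rule sum.cong[OF refl independent])
  then have "of_nat (card S) * (\<Sum>\<sigma>\<in>?P. h (\<sigma> i)) = (\<Sum>i'\<in>S. \<Sum>\<sigma>\<in>?P. h (\<sigma> i'))"
    by simp
  also have "\<dots> = (\<Sum>\<sigma>\<in>?P. \<Sum>i'\<in>S. h (\<sigma> i'))"
    by (rule sum.swap)
  also have "\<dots> = (\<Sum>\<sigma>\<in>?P. \<Sum>a\<in>S. h a)"
  proof (rule sum.cong[OF refl])
    fix \<sigma> assume "\<sigma> \<in> ?P"
    then show "(\<Sum>i'\<in>S. h (\<sigma> i')) = (\<Sum>a\<in>S. h a)"
      using sum.permute[of \<sigma> S h] by (simp add: comp_def)
  qed
  also have "\<dots> = of_nat (fact (card S)) * (\<Sum>a\<in>S. h a)"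
    using card_permutations[OF refl S] by simp
  also have "fact (card S) = card S * fact (card S - 1)"
    using fact_reduce[of "card S", where 'a = nat] S i by (auto simp: card_gt_0_iff)
  finally have "of_nat (card S) * (\<Sum>\<sigma>\<in>?P. h (\<sigma> i)) =
      of_nat (card S) * (of_nat (fact (card S - 1)) * (\<Sum>a\<in>S. h a))"
    by (simp add: mult.assoc)
  moreover have "card S \<noteq> 0"
    using S i by auto
  ultimately show ?thesis
    by simp
qed

lemma permutes_image_remove:
  assumes "\<sigma> permutes S"
  shows "\<sigma> ` (S - {i}) = S - {\<sigma> i}"
  using permutes_image[OF assms] by (simp add: image_set_diff[OF permutes_inj[OF assms]])

lemma prod_powi_shift:
  fixes x :: "'b \<Rightarrow> 'a::field"
  assumes "finite S" and "a \<in> S" and "\<forall>b\<in>S. x b \<noteq> 0"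
  shows "x a powi n * (\<Prod>b\<in>S-{a}. x b powi (n + 2)) = (\<Prod>b\<in>S. x b powi n) * (\<Prod>b\<in>S-{a}. x b ^ 2)"
  using assms by (simp add: power_int_add prod.distrib prod.remove mult.assoc)

instance fract :: ("{idom, ring_char_0}") field_char_0
  by standard (auto intro!: injI simp: of_nat_fract eq_fract)

lemma Ekn_eq_offdiag_prod:
  "Ekn k n x = (\<Prod>r<k. x r powi n) * offdiag_prod (qq powi (-2)) x {..<k}"
  by (simp add: Ekn_def offdiag_prod_def)

lemma Ekn_reindex:
  assumes "inj_on g {..<j}"
  shows "Ekn j s (x \<circ> g) =
    (\<Prod>b\<in>g ` {..<j}. x b powi s) * offdiag_prod (qq powi (-2)) x (g ` {..<j})"
  using assms by (simp add: Ekn_eq_offdiag_prod offdiag_prod_reindex prod.reindex)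

lemma shuf_ups_e_Ekn_summand:
  fixes x :: "nat \<Rightarrow> K"
  assumes \<sigma>: "\<sigma> permutes {..<Suc j}" and nonzero: "\<forall>r<Suc j. x r \<noteq> 0"
  shows "ups_e n (x \<circ> \<sigma>) * Ekn j (n + 2) (\<lambda>i. x (\<sigma> (1 + i))) *
      (\<Prod>r<1. \<Prod>r'\<in>{1..<1 + j}. (x (\<sigma> r) - qq powi (-2) * x (\<sigma> r')) / (x (\<sigma> r) - x (\<sigma> r'))) =
    (\<Prod>r<Suc j. x r powi n) * left_insertion_term (qq powi (-2)) x {..<Suc j} (\<sigma> 0)"
proof -
  define t where "t = qq powi (-2)"
  define S where "S = {..<Suc j}"
  have "{1..<1 + j} = S - {0}"
    by (auto simp: S_def)
  moreover have "(\<sigma> \<circ> Suc) ` {..<j} = \<sigma> ` (S - {0})"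
    unfolding S_def lessThan_Suc_eq_insert_0 image_comp[symmetric] by auto
  ultimately have image: "\<sigma> ` {1..<1 + j} = S - {\<sigma> 0}" "(\<sigma> \<circ> Suc) ` {..<j} = S - {\<sigma> 0}"
    using \<sigma> by (simp_all only: permutes_image_remove flip: S_def)
  have "inj_on (\<sigma> \<circ> Suc) {..<j}"
    by (intro comp_inj_on permutes_inj_on[OF \<sigma>]) simp
  from Ekn_reindex[OF this, of "n + 2" x]
  have E: "Ekn j (n + 2) (\<lambda>i. x (\<sigma> (1 + i))) =
      (\<Prod>b\<in>S-{\<sigma> 0}. x b powi (n + 2)) * offdiag_prod t x (S-{\<sigma> 0})"
    unfolding image(2) t_def by (simp add: comp_def)
  have K: "(\<Prod>r<1. \<Prod>r'\<in>{1..<1 + j}. (x (\<sigma> r) - t * x (\<sigma> r')) / (x (\<sigma> r) - x (\<sigma> r'))) =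
      (\<Prod>b\<in>S-{\<sigma> 0}. shuffle_factor t (x (\<sigma> 0)) (x b))"
    unfolding image(1)[symmetric] shuffle_factor_def
    by (simp add: prod.reindex[OF permutes_inj_on[OF \<sigma>]])
  have P: "x (\<sigma> 0) powi n * (\<Prod>b\<in>S-{\<sigma> 0}. x b powi (n + 2)) =
      (\<Prod>r\<in>S. x r powi n) * (\<Prod>b\<in>S-{\<sigma> 0}. x b ^ 2)"
    using nonzero permutes_in_image[OF \<sigma>, of 0] by (intro prod_powi_shift) (auto simp: S_def)
  show ?thesis
    unfolding t_def[symmetric] S_def[symmetric] E K ups_e_def left_insertion_term_def comp_apply
      mult.assoc[symmetric] P ..
qed

lemma shuf_ups_e_Ekn:
  fixes x :: "nat \<Rightarrow> K"
  assumes nonzero: "\<forall>r<Suc j. x r \<noteq> 0"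
  shows "shuf 1 j (ups_e n) (Ekn j (n + 2)) x =
    (\<Prod>r<Suc j. x r powi n) * left_insertion_sum (qq powi (-2)) x {..<Suc j}"
proof -
  let ?t = "qq powi (-2)" and ?P = "\<Prod>r<Suc j. x r powi n"
  have "shuf 1 j (ups_e n) (Ekn j (n + 2)) x = 1 / of_nat (fact 1 * fact j) *
      (\<Sum>\<sigma> | \<sigma> permutes {..<1 + j}. ups_e n (x \<circ> \<sigma>) * Ekn j (n + 2) (\<lambda>i. x (\<sigma> (1 + i))) *
      (\<Prod>r<1. \<Prod>r'\<in>{1..<1 + j}. (x (\<sigma> r) - ?t * x (\<sigma> r')) / (x (\<sigma> r) - x (\<sigma> r'))))"
    unfolding shuf_def ..
  also have "{..<1 + j} = {..<Suc j}"
    by simp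
  also have "(\<Sum>\<sigma> | \<sigma> permutes {..<Suc j}. ups_e n (x \<circ> \<sigma>) * Ekn j (n + 2) (\<lambda>i. x (\<sigma> (1 + i))) *
      (\<Prod>r<1. \<Prod>r'\<in>{1..<1 + j}. (x (\<sigma> r) - ?t * x (\<sigma> r')) / (x (\<sigma> r) - x (\<sigma> r')))) =
      (\<Sum>\<sigma> | \<sigma> permutes {..<Suc j}. ?P * left_insertion_term ?t x {..<Suc j} (\<sigma> 0))"
    using shuf_ups_e_Ekn_summand[OF _ nonzero] by (intro sum.cong) auto
  also have "1 / of_nat (fact 1 * fact j) * \<dots> = (\<Sum>a<Suc j. ?P * left_insertion_term ?t x {..<Suc j} a)"
    by (subst sum_permutes_apply) auto
  finally show ?thesis
    by (simp only: left_insertion_sum_def sum_distrib_left)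
qed

lemma shuf_Ekn_ups_e_summand:
  fixes x :: "nat \<Rightarrow> K"
  assumes \<sigma>: "\<sigma> permutes {..<Suc j}" and nonzero: "\<forall>r<Suc j. x r \<noteq> 0"
  shows "Ekn j (n + 2) (x \<circ> \<sigma>) * ups_e n (\<lambda>i. x (\<sigma> (j + i))) *
      (\<Prod>r<j. \<Prod>r'\<in>{j..<j + 1}. (x (\<sigma> r) - qq powi (-2) * x (\<sigma> r')) / (x (\<sigma> r) - x (\<sigma> r'))) =
    (\<Prod>r<Suc j. x r powi n) * right_insertion_term (qq powi (-2)) x {..<Suc j} (\<sigma> j)"
proof -
  define t where "t = qq powi (-2)"
  define S where "S = {..<Suc j}"
  have "{..<j} = S - {j}"
    by (auto simp: S_def)
  then have image: "\<sigma> ` {..<j} = S - {\<sigma> j}"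
    using \<sigma> by (simp only: permutes_image_remove flip: S_def)
  from Ekn_reindex[OF permutes_inj_on[OF \<sigma>], of j "n + 2" x]
  have E: "Ekn j (n + 2) (x \<circ> \<sigma>) =
      (\<Prod>b\<in>S-{\<sigma> j}. x b powi (n + 2)) * offdiag_prod t x (S-{\<sigma> j})"
    unfolding image t_def .
  have K: "(\<Prod>r<j. \<Prod>r'\<in>{j..<j + 1}. (x (\<sigma> r) - t * x (\<sigma> r')) / (x (\<sigma> r) - x (\<sigma> r'))) =
      (\<Prod>b\<in>S-{\<sigma> j}. shuffle_factor t (x b) (x (\<sigma> j)))"
    unfolding image[symmetric] shuffle_factor_def
    by (simp add: prod.reindex[OF permutes_inj_on[OF \<sigma>]])
  have P: "x (\<sigma> j) powi n * (\<Prod>b\<in>S-{\<sigma> j}. x b powi (n + 2)) =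
      (\<Prod>r\<in>S. x r powi n) * (\<Prod>b\<in>S-{\<sigma> j}. x b ^ 2)"
    using nonzero permutes_in_image[OF \<sigma>, of j] by (intro prod_powi_shift) (auto simp: S_def)
  show ?thesis
    unfolding t_def[symmetric] S_def[symmetric] E K ups_e_def right_insertion_term_def
    by (simp add: P[symmetric] ac_simps)
qed

lemma shuf_Ekn_ups_e:
  fixes x :: "nat \<Rightarrow> K"
  assumes nonzero: "\<forall>r<Suc j. x r \<noteq> 0"
  shows "shuf j 1 (Ekn j (n + 2)) (ups_e n) x =
    (\<Prod>r<Suc j. x r powi n) * right_insertion_sum (qq powi (-2)) x {..<Suc j}"
proof -
  let ?t = "qq powi (-2)" and ?P = "\<Prod>r<Suc j. x r powi n"
  have "shuf j 1 (Ekn j (n + 2)) (ups_e n) x = 1 / of_nat (fact j * fact 1) *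
      (\<Sum>\<sigma> | \<sigma> permutes {..<j + 1}. Ekn j (n + 2) (x \<circ> \<sigma>) * ups_e n (\<lambda>i. x (\<sigma> (j + i))) *
      (\<Prod>r<j. \<Prod>r'\<in>{j..<j + 1}. (x (\<sigma> r) - ?t * x (\<sigma> r')) / (x (\<sigma> r) - x (\<sigma> r'))))"
    unfolding shuf_def ..
  also have "{..<j + 1} = {..<Suc j}"
    by simp
  also have "(\<Sum>\<sigma> | \<sigma> permutes {..<Suc j}. Ekn j (n + 2) (x \<circ> \<sigma>) * ups_e n (\<lambda>i. x (\<sigma> (j + i))) *
      (\<Prod>r<j. \<Prod>r'\<in>{j..<j + 1}. (x (\<sigma> r) - ?t * x (\<sigma> r')) / (x (\<sigma> r) - x (\<sigma> r')))) =
      (\<Sum>\<sigma> | \<sigma> permutes {..<Suc j}. ?P * right_insertion_term ?t x {..<Suc j} (\<sigma> j))"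
    using shuf_Ekn_ups_e_summand[OF _ nonzero] by (intro sum.cong) auto
  also have "1 / of_nat (fact j * fact 1) * \<dots> = (\<Sum>a<Suc j. ?P * right_insertion_term ?t x {..<Suc j} a)"
    by (subst sum_permutes_apply) auto
  finally show ?thesis
    by (simp only: right_insertion_sum_def sum_distrib_left)
qed

lemma qq_nonzero: "qq \<noteq> 0"
  by (simp add: qq_def eq_fract fract_expand)

lemma qq_powi_minus2_ne_1: "qq powi (-2) \<noteq> 1"
proof -
  have "qq ^ 2 \<noteq> 1"
    by (simp add: qq_def eq_fract fract_expand power2_eq_square one_pCons)
  then show ?thesis
    using qq_nonzero by (simp add: power_int_minus field_simps)
qed

lemma qbr_ups_e_Ekn:
  fixes x :: "nat \<Rightarrow> K"
  assumes inj: "inj_on x {..<Suc j}" and nonzero: "\<forall>r<Suc j. x r \<noteq> 0"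
  shows "qbr 1 j ((qq powi (-2)) ^ Suc j) (ups_e n) (Ekn j (n + 2)) x =
    (-1) ^ j * (1 - qq powi (-2)) * Ekn (Suc j) n x"
proof -
  let ?t = "qq powi (-2)" and ?S = "{..<Suc j}"
  have "insertion_defect ?t x ?S = 0"
    using inj qq_nonzero qq_powi_minus2_ne_1 by (intro insertion_defect_eq_0) auto
  then have identity: "left_insertion_sum ?t x ?S - ?t ^ Suc j * right_insertion_sum ?t x ?S =
      (-1) ^ j * (1 - ?t) * offdiag_prod ?t x ?S"
    by (simp add: insertion_defect_def)
  have "qbr 1 j (?t ^ Suc j) (ups_e n) (Ekn j (n + 2)) x = (\<Prod>r<Suc j. x r powi n) *
      (left_insertion_sum ?t x ?S - ?t ^ Suc j * right_insertion_sum ?t x ?S)"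
    unfolding qbr_def shuf_ups_e_Ekn[OF nonzero] shuf_Ekn_ups_e[OF nonzero]
    by (simp add: right_diff_distrib ac_simps)
  also have "\<dots> = (\<Prod>r<Suc j. x r powi n) * ((-1) ^ j * (1 - ?t) * offdiag_prod ?t x ?S)"
    by (simp only: identity)
  finally show ?thesis
    by (simp add: Ekn_eq_offdiag_prod ac_simps)
qed

lemma inj_nonzero_permutes_comp:
  assumes "\<sigma> permutes S" and "inj_on x S" and "\<forall>r\<in>S. x r \<noteq> 0"
    and "inj_on g A" and "g ` A \<subseteq> S"
  shows "inj_on (\<lambda>i. x (\<sigma> (g i))) A" and "\<forall>i\<in>A. x (\<sigma> (g i)) \<noteq> 0"
proof -
  have "\<sigma> ` g ` A \<subseteq> S"
    using assms(1,5) permutes_image by blast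
  then have "inj_on x ((\<sigma> \<circ> g) ` A)"
    using inj_on_subset[OF assms(2)] by (simp add: image_comp)
  then show "inj_on (\<lambda>i. x (\<sigma> (g i))) A"
    using comp_inj_on[OF comp_inj_on[OF assms(4) permutes_inj_on[OF assms(1)]]]
    by (simp add: comp_def)
  show "\<forall>i\<in>A. x (\<sigma> (g i)) \<noteq> 0"
    using \<open>\<sigma> ` g ` A \<subseteq> S\<close> assms(3) by blast
qed

lemma shuf_cong:
  assumes x: "inj_on x {..<k + l}" "\<forall>r<k + l. x r \<noteq> 0"
    and F: "\<And>y. inj_on y {..<k} \<Longrightarrow> \<forall>r<k. y r \<noteq> 0 \<Longrightarrow> F y = F' y"
    and G: "\<And>y. inj_on y {..<l} \<Longrightarrow> \<forall>r<l. y r \<noteq> 0 \<Longrightarrow> G y = G' y"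
  shows "shuf k l F G x = shuf k l F' G' x"
proof -
  have "F (x \<circ> \<sigma>) = F' (x \<circ> \<sigma>) \<and> G (\<lambda>i. x (\<sigma> (k + i))) = G' (\<lambda>i. x (\<sigma> (k + i)))"
    if \<sigma>: "\<sigma> permutes {..<k + l}" for \<sigma>
  proof -
    have nonzero: "\<forall>r\<in>{..<k + l}. x r \<noteq> 0"
      using x(2) by simp
    have "(\<lambda>i. k + i) ` {..<l} \<subseteq> {..<k + l}"
      by auto
    then show ?thesis
      using inj_nonzero_permutes_comp[OF \<sigma> x(1) nonzero, of id "{..<k}"]
        inj_nonzero_permutes_comp[OF \<sigma> x(1) nonzero, of "\<lambda>i. k + i" "{..<l}"]
      by (intro conjI F G) (auto simp: comp_def)
  qed
  then show ?thesis
    unfolding shuf_def by (intro arg_cong2[where f = "(*)"] refl sum.cong) auto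
qed

lemma shuf_scale_left: "shuf k l (\<lambda>y. c * F y) G x = c * shuf k l F G x"
  by (simp add: shuf_def sum_distrib_left ac_simps)

lemma shuf_scale_right: "shuf k l F (\<lambda>y. c * G y) x = c * shuf k l F G x"
  by (simp add: shuf_def sum_distrib_left ac_simps)

lemma qbr_scale_right_cong:
  assumes x: "inj_on x {..<k + l}" "\<forall>r<k + l. x r \<noteq> 0"
    and G: "\<And>y. inj_on y {..<l} \<Longrightarrow> \<forall>r<l. y r \<noteq> 0 \<Longrightarrow> G y = c * G' y"
  shows "qbr k l d F G x = c * qbr k l d F G' x"
proof -
  have "shuf k l F G x = shuf k l F (\<lambda>y. c * G' y) x"
    using x G by (intro shuf_cong) auto
  moreover have "shuf l k G F x = shuf l k (\<lambda>y. c * G' y) F x"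
    using x G by (intro shuf_cong) (auto simp: add.commute)
  ultimately show ?thesis
    by (simp add: qbr_def shuf_scale_left shuf_scale_right algebra_simps)
qed

section \<open>The nested q-commutators\<close>

lemma nestY_Suc:
  assumes "j \<ge> 1"
  shows "nestY (Suc j) s = qbr 1 j ((qq powi (-2)) ^ Suc j) (ups_e s) (nestY j (s + 2))"
proof -
  obtain m where j: "j = Suc m"
    using assms by (cases j) auto
  have "-2 * (int m + 2) = -2 * int (Suc j)"
    by (simp add: j)
  then have "qq powi (-2 * (int m + 2)) = (qq powi (-2)) ^ Suc j"
    by (simp only: power_int_mult power_int_of_nat)
  then show ?thesis
    unfolding j by (simp only: nestY.simps)
qed

definition nestY_coeff :: "nat \<Rightarrow> K" where
  "nestY_coeff k = (-1) ^ (k * (k - 1) div 2) / (1 - qq powi (-2)) ^ (k - 1)"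

lemma nestY_coeff_nonzero: "nestY_coeff k \<noteq> 0"
  using qq_powi_minus2_ne_1 by (simp add: nestY_coeff_def)

lemma nestY_coeff_Suc:
  assumes "k \<ge> 1"
  shows "nestY_coeff (Suc k) * ((-1) ^ k * (1 - qq powi (-2))) = nestY_coeff k"
proof -
  define u where "u = 1 - qq powi (-2)"
  have u: "u \<noteq> 0"
    using qq_powi_minus2_ne_1 by (simp add: u_def)
  have "Suc k * k = k * (k - 1) + 2 * k"
    using assms by (cases k) auto
  then have "Suc k * (Suc k - 1) div 2 = k * (k - 1) div 2 + k"
    by simp
  moreover have "u ^ k = u ^ (k - 1) * u"
    using assms by (cases k) auto
  moreover have "(-1 :: K) ^ k * (-1) ^ k = 1"
    by (simp flip: power_mult_distrib)
  ultimately show ?thesis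
    using u by (simp add: nestY_coeff_def power_add field_simps flip: u_def)
qed

lemma Ekn_eq_nestY:
  fixes x :: "nat \<Rightarrow> K"
  assumes "k \<ge> 1" and "inj_on x {..<k}" and "\<forall>r<k. x r \<noteq> 0"
  shows "Ekn k n x = nestY_coeff k * nestY k n x"
  using assms
proof (induction k arbitrary: n x rule: nat_induct_at_least)
  case base
  then show ?case
    by (simp add: Ekn_def nestY_coeff_def ups_e_def lessThan_Suc)
next
  case (Suc j)
  let ?t = "qq powi (-2)"
  have "nestY j (n + 2) y = (1 / nestY_coeff j) * Ekn j (n + 2) y"
    if "inj_on y {..<j}" "\<forall>r<j. y r \<noteq> 0" for y
    using Suc.IH[OF that] nestY_coeff_nonzero[of j] by simp
  then have "nestY (Suc j) n x = (1 / nestY_coeff j) * qbr 1 j (?t ^ Suc j) (ups_e n) (Ekn j (n + 2)) x"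
    unfolding nestY_Suc[OF Suc.hyps] using Suc.prems by (intro qbr_scale_right_cong) auto
  also have "\<dots> = (1 / nestY_coeff j) * ((-1) ^ j * (1 - ?t)) * Ekn (Suc j) n x"
    by (simp only: qbr_ups_e_Ekn[OF Suc.prems] mult.assoc)
  finally have "nestY_coeff (Suc j) * nestY (Suc j) n x =
      nestY_coeff (Suc j) * ((-1) ^ j * (1 - ?t)) / nestY_coeff j * Ekn (Suc j) n x"
    by (simp add: divide_inverse ac_simps)
  then show ?case
    using nestY_coeff_Suc[OF Suc.hyps] nestY_coeff_nonzero[of j] by simp
qed

theorem lemma6p1:
  fixes k :: nat and n :: int and x :: "nat \<Rightarrow> K"
  assumes "k \<ge> 1"
    and "inj_on x {..<k}"
    and "\<forall>r<k. x r \<noteq> 0"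
  shows "Ekn k n x =
    ((-1) ^ (k * (k - 1) div 2) / (1 - qq powi (-2)) ^ (k - 1)) * nestY k n x"
  using Ekn_eq_nestY[OF assms] by (simp add: nestY_coeff_def)

end
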